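(* Let $n\geq 2$ and let $\mathcal{G}=(\mathcal{V},\mathcal{E})$ be a directed graph on $\mathcal{V}=\{1,\ldots,n\}$ in which every node has at least one outgoing edge, with hyperlink matrix $A$, let $m\in(0,1)$, and let $x^*$ be the PageRank vector. Let $\{\phi(k)\}_{k\geq 0}$ be a sequence of subsets $\phi(k)\subset\mathcal{V}$ such that every $i\in\mathcal{V}$ belongs to $\phi(k)$ for infinitely many $k$. Consider the algorithm with initial states $x_i(0)=z_i(0)=m/n$ for all $i$, and for $k\geq 0$ and each $i\in\mathcal{V}$, $$x_i(k+1)=x_i(k)+\sum_{j\in\mathcal{L}_i^{\text{in}}\cap\phi(k)}\frac{1-m}{n_j}z_j(k),$$ $$z_i(k+1)=\begin{cases}\displaystyle\sum_{j\in\mathcal{L}_i^{\text{in}}\cap\phi(k)}\frac{1-m}{n_j}z_j(k)&\text{if } i\in\phi(k),\\ \displaystyle z_i(k)+\sum_{j\in\mathcal{L}_i^{\text{in}}\cap\phi(k)}\frac{1-m}{n_j}z_j(k)&\text{otherwise.}\end{cases}$$ Then $x(k)\leq x(k+1)\leq x^*$ for all $k\geq 0$.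
   Context: Write $(i,j)\in\mathcal{E}$ if page $i$ has a link to page $j$. $\mathcal{L}_j^{\text{out}}=\{i:(j,i)\in\mathcal{E}\}$, $\mathcal{L}_i^{\text{in}}=\{j:(j,i)\in\mathcal{E}\}$, and $n_j=|\mathcal{L}_j^{\text{out}}|\geq 1$. The hyperlink matrix $A=(a_{ij})$ is defined by $a_{ij}=1/n_j$ if $i\in\mathcal{L}_j^{\text{out}}$ and $a_{ij}=0$ otherwise (column stochastic). The PageRank vector $x^*$ satisfies $x^*=(1-m)Ax^*+\frac{m}{n}\mathbf{1}_n$ and $\mathbf{1}_n^Tx^*=1$. Here $x(k)=(x_1(k),\ldots,x_n(k))^T$ and inequalities between vectors are entrywise. *)

theory Defs
  imports "HOL-Analysis.Analysis"
begin

text \<open>Graph on nodes V = {1..n}; E is the edge set, (i,j) \<in> E means page i links to page j.\<close>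

definition L_out :: "(nat \<times> nat) set \<Rightarrow> nat \<Rightarrow> nat set" where
  "L_out E j = {i. (j, i) \<in> E}"

definition L_in :: "(nat \<times> nat) set \<Rightarrow> nat \<Rightarrow> nat set" where
  "L_in E i = {j. (j, i) \<in> E}"

definition outdeg :: "(nat \<times> nat) set \<Rightarrow> nat \<Rightarrow> nat" where
  "outdeg E j = card (L_out E j)"

definition hyperlink :: "(nat \<times> nat) set \<Rightarrow> nat \<Rightarrow> nat \<Rightarrow> real" where
  "hyperlink E i j = (if i \<in> L_out E j then 1 / real (outdeg E j) else 0)"

definition is_pagerank :: "nat \<Rightarrow> (nat \<times> nat) set \<Rightarrow> real \<Rightarrow> (nat \<Rightarrow> real) \<Rightarrow> bool" where
  "is_pagerank n E m xs \<longleftrightarrow>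
     (\<forall>i\<in>{1..n}. xs i = (1 - m) * (\<Sum>j\<in>{1..n}. hyperlink E i j * xs j) + m / real n)
     \<and> (\<Sum>i\<in>{1..n}. xs i) = 1"

definition incr :: "nat \<Rightarrow> (nat \<times> nat) set \<Rightarrow> real \<Rightarrow> nat set \<Rightarrow> (nat \<Rightarrow> real) \<Rightarrow> nat \<Rightarrow> real" where
  "incr n E m S z i = (\<Sum>j\<in>L_in E i \<inter> S. (1 - m) / real (outdeg E j) * z j)"

fun pr_alg :: "nat \<Rightarrow> (nat \<times> nat) set \<Rightarrow> real \<Rightarrow> (nat \<Rightarrow> nat set) \<Rightarrow> nat
                 \<Rightarrow> (nat \<Rightarrow> real) \<times> (nat \<Rightarrow> real)" where
  "pr_alg n E m \<phi> 0 = ((\<lambda>i. m / real n), (\<lambda>i. m / real n))"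
| "pr_alg n E m \<phi> (Suc k) =
     (let (x, z) = pr_alg n E m \<phi> k in
      ((\<lambda>i. x i + incr n E m (\<phi> k) z i),
       (\<lambda>i. if i \<in> \<phi> k then incr n E m (\<phi> k) z i
            else z i + incr n E m (\<phi> k) z i)))"

definition alg_x where "alg_x n E m \<phi> k = fst (pr_alg n E m \<phi> k)"
definition alg_z where "alg_z n E m \<phi> k = snd (pr_alg n E m \<phi> k)"

end

theory Submission
  imports Defs
begin

text \<open>Since z(k) stays nonnegative, the increments of x are nonnegative. For the upper bound,
  the gap w(k) = x* - x(k) satisfies the invariant w(k) = (1 - m) A (w(k) + z(k)): it holds at
  k = 0 because x(0) = z(0), and each step moves exactly the mass (1 - m) A z(k) restricted to
  \<phi>(k) out of w and out of w + z. As z(k) \<ge> 0 and A \<ge> 0, this gives w(k) \<ge> (1 - m) A w(k),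
  and a vector dominating its image under a column-substochastic matrix scaled by 1 - m < 1
  must be nonnegative: summing the inequality over its negative part yields
  (1 - (1 - m)) \<Sigma> min(w, 0) \<ge> 0.\<close>

lemma substochastic_supersolution_nonneg:
  fixes h :: "'a \<Rightarrow> 'a \<Rightarrow> real" and w :: "'a \<Rightarrow> real"
  assumes "finite I" and "0 \<le> c" and "c < 1"
    and h_nonneg: "\<And>i j. i \<in> I \<Longrightarrow> j \<in> I \<Longrightarrow> 0 \<le> h i j"
    and column_sum: "\<And>j. j \<in> I \<Longrightarrow> (\<Sum>i\<in>I. h i j) \<le> 1"
    and super: "\<And>i. i \<in> I \<Longrightarrow> c * (\<Sum>j\<in>I. h i j * w j) \<le> w i"
    and "i \<in> I"
  shows "0 \<le> w i"
proof -
  define u where "u j = min (w j) 0" for j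
  have u_nonpos: "u j \<le> 0" for j
    by (simp add: u_def)
  have u_super: "c * (\<Sum>j\<in>I. h i j * u j) \<le> u i" if "i \<in> I" for i
  proof -
    have "(\<Sum>j\<in>I. h i j * u j) \<le> (\<Sum>j\<in>I. h i j * w j)"
      using h_nonneg \<open>i \<in> I\<close> by (intro sum_mono mult_left_mono) (auto simp: u_def)
    then have "c * (\<Sum>j\<in>I. h i j * u j) \<le> w i"
      using super[OF \<open>i \<in> I\<close>] \<open>0 \<le> c\<close> by (meson mult_left_mono order_trans)
    moreover have "c * (\<Sum>j\<in>I. h i j * u j) \<le> 0"
      using h_nonneg \<open>i \<in> I\<close> u_nonpos \<open>0 \<le> c\<close>
      by (intro mult_nonneg_nonpos sum_nonpos) (auto intro: mult_nonneg_nonpos)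
    ultimately show ?thesis
      by (simp add: u_def)
  qed
  have "c * (\<Sum>j\<in>I. u j) \<le> c * (\<Sum>j\<in>I. u j * (\<Sum>i\<in>I. h i j))"
    using column_sum u_nonpos \<open>0 \<le> c\<close>
    by (intro mult_left_mono sum_mono) (metis mult.right_neutral mult_left_mono_neg)
  also have "\<dots> = c * (\<Sum>j\<in>I. \<Sum>i\<in>I. h i j * u j)"
    by (simp add: sum_distrib_left mult.commute)
  also have "\<dots> = c * (\<Sum>i\<in>I. \<Sum>j\<in>I. h i j * u j)"
    by (simp only: sum.swap[of "\<lambda>j i. h i j * u j" I I])
  also have "\<dots> = (\<Sum>i\<in>I. c * (\<Sum>j\<in>I. h i j * u j))"
    by (simp add: sum_distrib_left)
  also have "\<dots> \<le> (\<Sum>i\<in>I. u i)"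
    using u_super by (rule sum_mono)
  finally have "0 \<le> (1 - c) * (\<Sum>i\<in>I. u i)"
    by (simp add: algebra_simps)
  then have "0 \<le> (\<Sum>i\<in>I. u i)"
    using \<open>c < 1\<close> by (simp add: zero_le_mult_iff)
  moreover have "(\<Sum>i\<in>I. u i) \<le> 0"
    using u_nonpos by (simp add: sum_nonpos)
  ultimately have "(\<Sum>i\<in>I. - u i) = 0"
    by (simp add: sum_negf)
  then have "u i = 0"
    using \<open>finite I\<close> \<open>i \<in> I\<close> u_nonpos by (subst (asm) sum_nonneg_eq_0_iff) auto
  then show ?thesis
    by (simp add: u_def)
qed

lemma hyperlink_nonneg: "0 \<le> hyperlink E i j"
  by (simp add: hyperlink_def)

lemma sum_hyperlink_le_1:
  assumes "finite V" and "L_out E j \<subseteq> V"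
  shows "(\<Sum>i\<in>V. hyperlink E i j) \<le> 1"
proof -
  have "(\<Sum>i\<in>V. hyperlink E i j) = (\<Sum>i\<in>L_out E j. 1 / real (outdeg E j))"
    using assms by (simp add: hyperlink_def sum.inter_restrict[symmetric] Int_absorb1)
  also have "\<dots> \<le> 1"
    by (simp add: outdeg_def)
  finally show ?thesis .
qed

lemma incr_eq_hyperlink_sum:
  assumes "finite V" and "L_in E i \<subseteq> V"
  shows "incr n E m S z i = (1 - m) * (\<Sum>j\<in>V. hyperlink E i j * (if j \<in> S then z j else 0))"
proof -
  have "incr n E m S z i = (\<Sum>j\<in>V \<inter> (L_in E i \<inter> S). (1 - m) / real (outdeg E j) * z j)"
    using assms(2) by (simp add: incr_def Int_absorb1 inf.coboundedI1)
  also have "\<dots> = (\<Sum>j\<in>V. (1 - m) * (hyperlink E i j * (if j \<in> S then z j else 0)))"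
    using assms(1) by (subst sum.inter_restrict)
      (auto intro!: sum.cong simp: hyperlink_def L_in_def L_out_def)
  finally show ?thesis
    by (simp add: sum_distrib_left)
qed

lemma incr_nonneg:
  assumes "m \<le> 1" and "\<And>j. 0 \<le> z j"
  shows "0 \<le> incr n E m S z i"
  unfolding incr_def using assms by (intro sum_nonneg) auto

lemma alg_x_0: "alg_x n E m \<phi> 0 = (\<lambda>i. m / real n)"
  and alg_z_0: "alg_z n E m \<phi> 0 = (\<lambda>i. m / real n)"
  by (simp_all add: alg_x_def alg_z_def)

lemma alg_x_Suc:
  "alg_x n E m \<phi> (Suc k) i = alg_x n E m \<phi> k i + incr n E m (\<phi> k) (alg_z n E m \<phi> k) i"
  by (simp add: alg_x_def alg_z_def case_prod_beta)

lemma alg_z_Suc: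
  "alg_z n E m \<phi> (Suc k) i =
     (if i \<in> \<phi> k then incr n E m (\<phi> k) (alg_z n E m \<phi> k) i
      else alg_z n E m \<phi> k i + incr n E m (\<phi> k) (alg_z n E m \<phi> k) i)"
  by (simp add: alg_x_def alg_z_def case_prod_beta)

lemma alg_z_nonneg:
  assumes "0 \<le> m" and "m \<le> 1"
  shows "0 \<le> alg_z n E m \<phi> k i"
proof (induction k arbitrary: i)
  case 0
  then show ?case using assms by (simp add: alg_z_0)
next
  case (Suc k)
  then show ?case
    using incr_nonneg[OF \<open>m \<le> 1\<close>, of "alg_z n E m \<phi> k"] by (simp add: alg_z_Suc)
qed

lemma alg_x_mono:
  assumes "0 \<le> m" and "m \<le> 1"
  shows "alg_x n E m \<phi> k i \<le> alg_x n E m \<phi> (Suc k) i"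
  using incr_nonneg[OF \<open>m \<le> 1\<close> alg_z_nonneg[OF assms]] by (simp add: alg_x_Suc)

lemma pagerank_gap_invariant:
  assumes "E \<subseteq> {1..n} \<times> {1..n}" and "is_pagerank n E m xs" and "i \<in> {1..n}"
  shows "xs i - alg_x n E m \<phi> k i =
    (1 - m) * (\<Sum>j\<in>{1..n}. hyperlink E i j * (xs j - alg_x n E m \<phi> k j + alg_z n E m \<phi> k j))"
  using \<open>i \<in> {1..n}\<close>
proof (induction k arbitrary: i)
  case 0
  then show ?case using assms(2) by (simp add: is_pagerank_def alg_x_0 alg_z_0)
next
  case (Suc k)
  let ?x = "alg_x n E m \<phi>" and ?z = "alg_z n E m \<phi>"
  have L_in_sub: "L_in E i \<subseteq> {1..n}"
    using assms(1) by (auto simp: L_in_def)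
  have step: "xs j - ?x k j + ?z k j - (if j \<in> \<phi> k then ?z k j else 0)
      = xs j - ?x (Suc k) j + ?z (Suc k) j" for j
    by (simp add: alg_x_Suc alg_z_Suc)
  have "xs i - ?x (Suc k) i = xs i - ?x k i - incr n E m (\<phi> k) (?z k) i"
    by (simp add: alg_x_Suc)
  also have "\<dots> = (1 - m) * (\<Sum>j\<in>{1..n}. hyperlink E i j * (xs j - ?x k j + ?z k j))
      - (1 - m) * (\<Sum>j\<in>{1..n}. hyperlink E i j * (if j \<in> \<phi> k then ?z k j else 0))"
    by (simp only: Suc.IH[OF Suc.prems] incr_eq_hyperlink_sum[OF finite_atLeastAtMost L_in_sub])
  also have "\<dots> = (1 - m) * (\<Sum>j\<in>{1..n}. hyperlink E i j
      * (xs j - ?x k j + ?z k j - (if j \<in> \<phi> k then ?z k j else 0)))"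
    by (simp add: right_diff_distrib sum_subtractf)
  finally show ?case
    by (simp only: step)
qed

lemma alg_x_le_pagerank:
  assumes "E \<subseteq> {1..n} \<times> {1..n}" and "0 < m" and "m \<le> 1"
    and "is_pagerank n E m xs" and "i \<in> {1..n}"
  shows "alg_x n E m \<phi> k i \<le> xs i"
proof -
  let ?w = "\<lambda>j. xs j - alg_x n E m \<phi> k j"
  have column_sum: "(\<Sum>i\<in>{1..n}. hyperlink E i j) \<le> 1" for j
    using assms(1) by (intro sum_hyperlink_le_1) (auto simp: L_out_def)
  have super: "(1 - m) * (\<Sum>j\<in>{1..n}. hyperlink E i j * ?w j) \<le> ?w i" if "i \<in> {1..n}" for i
  proof -
    have "(\<Sum>j\<in>{1..n}. hyperlink E i j * ?w j)
        \<le> (\<Sum>j\<in>{1..n}. hyperlink E i j * (?w j + alg_z n E m \<phi> k j))"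
      using alg_z_nonneg[of m] assms(2,3)
      by (intro sum_mono mult_left_mono) (auto simp: hyperlink_nonneg)
    then have "(1 - m) * (\<Sum>j\<in>{1..n}. hyperlink E i j * ?w j)
        \<le> (1 - m) * (\<Sum>j\<in>{1..n}. hyperlink E i j * (?w j + alg_z n E m \<phi> k j))"
      using assms(3) by (intro mult_left_mono) auto
    also have "\<dots> = ?w i"
      by (rule pagerank_gap_invariant[OF assms(1,4) that, symmetric])
    finally show ?thesis .
  qed
  have "0 \<le> ?w i"
    by (rule substochastic_supersolution_nonneg[where h = "hyperlink E", OF _ _ _ _ column_sum super])
      (use assms(2,3,5) in \<open>auto simp: hyperlink_nonneg\<close>)
  then show ?thesis by simp
qed

theorem lemma3:
  fixes n :: nat and E :: "(nat \<times> nat) set" and m :: real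
    and xs :: "nat \<Rightarrow> real" and \<phi> :: "nat \<Rightarrow> nat set"
  assumes "n \<ge> 2"
    and "E \<subseteq> {1..n} \<times> {1..n}"
    and "\<forall>j\<in>{1..n}. outdeg E j \<ge> 1"
    and "0 < m" and "m < 1"
    and "is_pagerank n E m xs"
    and "\<forall>k. \<phi> k \<subseteq> {1..n}"
    and "\<forall>i\<in>{1..n}. infinite {k. i \<in> \<phi> k}"
  shows "\<forall>k. \<forall>i\<in>{1..n}.
           alg_x n E m \<phi> k i \<le> alg_x n E m \<phi> (Suc k) i
         \<and> alg_x n E m \<phi> (Suc k) i \<le> xs i"
  using alg_x_mono alg_x_le_pagerank assms(2,4,5,6) by (simp add: less_imp_le)

end
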